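(* Let $\mathbb{F}$ be an algebraically closed field of characteristic zero and $J_1=E_{12}$. Let $\underline{A}=(J_1,A_2,A_3)$ and $\underline{B}=(J_1,B_2,B_3)$ be elements of $\mathcal{N}_3^3$ such that $f(\underline{A})=f(\underline{B})$ for all $f\in S_{3,3}$. Then $f(\underline{A})=f(\underline{B})$ for all $f\in P_{3,3}$.
   Context: $E_{ij}$ is the $3\times3$ matrix unit. $\mathcal{N}_3^3$ is the set of triples of nilpotent $3\times3$ matrices over $\mathbb{F}$. $\mathrm{tr}(Y_{i_1}\cdots Y_{i_r})$ denotes the function $\underline{A}\mapsto\mathrm{tr}(A_{i_1}\cdots A_{i_r})$. $S_{3,3}$ is the set consisting of: $\mathrm{tr}(Y_iY_j),\ \mathrm{tr}(Y_i^2Y_j),\ \mathrm{tr}(Y_iY_j^2),\ \mathrm{tr}(Y_i^2Y_j^2),\ \mathrm{tr}(Y_i^2Y_j^2Y_iY_j)$ for $1\le i<j\le3$; $\mathrm{tr}(Y_1Y_2Y_3)$, $\mathrm{tr}(Y_1Y_3Y_2)$; $\mathrm{tr}(Y_i^2Y_jY_k)$ for $\{i,j,k\}=\{1,2,3\}$; $\mathrm{tr}(Y_1^2Y_2Y_1Y_3)$, $\mathrm{tr}(Y_2^2Y_1Y_2Y_3)$, $\mathrm{tr}(Y_3^2Y_1Y_3Y_2)$. $P_{3,3}=S_{3,3}\sqcup P'_{3,3}$, where $P'_{3,3}$ consists of $\mathrm{tr}(Y_i^2Y_j^2Y_k)$ and $\mathrm{tr}(Y_i^2Y_j^2Y_iY_k)$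 for $\{i,j,k\}=\{1,2,3\}$, and $\mathrm{tr}(Y_1^2Y_2^2Y_3^2)$. *)

theory Defs
  imports "HOL-Analysis.Analysis" "HOL-Computational_Algebra.Polynomial"
begin

type_synonym 'a mat3 = "'a^3^3"

primrec mpow :: "'a::semiring_1 mat3 \<Rightarrow> nat \<Rightarrow> 'a mat3" where
  "mpow A 0 = mat 1"
| "mpow A (Suc k) = A ** mpow A k"

definition nilpotent3 :: "'a::semiring_1 mat3 \<Rightarrow> bool" where
  "nilpotent3 A \<longleftrightarrow> (\<exists>k. mpow A k = mat 0)"

text \<open>The matrix unit E_12 (rows/columns 1,2,3 of the paper are indices 0,1,2 of type 3).\<close>
definition J1 :: "'a::semiring_1 mat3" where
  "J1 = (\<chi> r c. if r = (0::3) \<and> c = (1::3) then 1 else 0)"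

definition triple :: "'a mat3 \<Rightarrow> 'a mat3 \<Rightarrow> 'a mat3 \<Rightarrow> nat \<Rightarrow> 'a mat3" where
  "triple X1 X2 X3 = (\<lambda>i. if i = 1 then X1 else if i = 2 then X2 else X3)"

definition in_N33 :: "(nat \<Rightarrow> 'a::semiring_1 mat3) \<Rightarrow> bool" where
  "in_N33 A \<longleftrightarrow> (\<forall>i\<in>{1,2,3}. nilpotent3 (A i))"

definition trw :: "(nat \<Rightarrow> 'a::comm_semiring_1 mat3) \<Rightarrow> nat list \<Rightarrow> 'a" where
  "trw A w = trace (foldr (\<lambda>i M. A i ** M) w (mat 1))"

definition S33 :: "nat list set" where
  "S33 =
     {[i,j] | i j. 1 \<le> i \<and> i < j \<and> j \<le> 3}
   \<union> {[i,i,j] | i j. 1 \<le> i \<and> i < j \<and> j \<le> 3}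
   \<union> {[i,j,j] | i j. 1 \<le> i \<and> i < j \<and> j \<le> 3}
   \<union> {[i,i,j,j] | i j. 1 \<le> i \<and> i < j \<and> j \<le> 3}
   \<union> {[i,i,j,j,i,j] | i j. 1 \<le> i \<and> i < j \<and> j \<le> 3}
   \<union> {[1,2,3], [1,3,2]}
   \<union> {[i,i,j,k] | i j k. {i,j,k} = {1,2,3}}
   \<union> {[1,1,2,1,3], [2,2,1,2,3], [3,3,1,3,2]}"

definition P33' :: "nat list set" where
  "P33' =
     {[i,i,j,j,k] | i j k. {i,j,k} = {1,2,3}}
   \<union> {[i,i,j,j,i,k] | i j k. {i,j,k} = {1,2,3}}
   \<union> {[1,1,2,2,3,3]}"

definition P33 :: "nat list set" where
  "P33 = S33 \<union> P33'"

end

theory Submission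
  imports Defs
begin

(* Over an algebraically closed field a nilpotent 3x3 matrix has tr A = tr A^2 = det A = 0.
   Since tr(J1 M) is the (2,1) entry of M and J1^2 = 0, after cyclic rotation every word of P'33
   either vanishes on (J1, a, b) or is the (2,1) entry of a^2 b^2, b^2 a^2, a^2 b^2 a or b^2 a^2 b.
   For pairs of matrices with vanishing invariants, polynomial identities express these entries,
   multiplied by a suitable value of a word of S33, through values of words of S33; a case split
   on which of these multipliers is non-zero (if all vanish, so does the entry) shows that the
   entries are determined by the values on S33. *)

lemma mpow_mult_eigenvector:
  fixes A :: "'a::comm_ring_1 mat3"
  assumes "A *v x = l *s x"
  shows "mpow A n *v x = (l ^ n) *s x"
proof (induction n)
  case 0
  then show ?case by (simp add: matrix_vector_mul_lid)
next
  case (Suc n)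
  have "mpow A (Suc n) *v x = A *v ((l ^ n) *s x)"
    by (simp add: Suc matrix_vector_mul_assoc[symmetric])
  also have "\<dots> = (l ^ n) *s (A *v x)"
    by (simp add: vec_eq_iff matrix_vector_mult_def sum_3 algebra_simps)
  also have "\<dots> = (l ^ Suc n) *s x"
    by (simp add: assms vector_smult_assoc mult.commute)
  finally show ?case .
qed

lemma det_mpow: "det (mpow A n) = det A ^ n"
  by (induction n) (simp_all add: det_mul)

lemma nilpotent3_det:
  fixes A :: "'a::idom mat3"
  assumes "nilpotent3 A"
  shows "det A = 0"
proof -
  obtain k where "mpow A k = mat 0"
    using assms unfolding nilpotent3_def by blast
  then have "det A ^ k = det (mat 0 :: 'a mat3)"
    by (metis det_mpow)
  also have "\<dots> = 0"
    by (simp add: det_3 mat_def)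
  finally have "det A ^ k = 0" .
  then show ?thesis by simp
qed

lemma nilpotent3_det_diff_mat:
  fixes A :: "'a::field mat3"
  assumes "nilpotent3 A" "l \<noteq> 0"
  shows "det (A - mat l) \<noteq> 0"
proof
  assume "det (A - mat l) = 0"
  then have "\<nexists>B. B ** (A - mat l) = mat 1"
    using invertible_det_nz invertible_left_inverse by blast
  then obtain x where x: "(A - mat l) *v x = 0" "x \<noteq> 0"
    using matrix_left_invertible_ker by blast
  have "A *v x = l *s x"
    using x(1) by (simp add: vec_eq_iff matrix_vector_mult_def sum_3 forall_3 mat_def algebra_simps)
  then have "mpow A k *v x = (l ^ k) *s x" for k
    by (rule mpow_mult_eigenvector)
  moreover obtain k where "mpow A k = mat 0"
    using assms(1) unfolding nilpotent3_def by blast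
  ultimately have "(l ^ k) *s x = 0"
    by (metis mat_0 matrix_vector_mult_0)
  then show False
    using x(2) assms(2) by (simp add: vec_eq_iff)
qed

definition nil_invariants :: "'a::comm_ring_1 mat3 \<Rightarrow> bool" where
  "nil_invariants A \<longleftrightarrow> trace A = 0 \<and> trace (A ** A) = 0 \<and> det A = 0"

lemma nilpotent3_nil_invariants:
  fixes A :: "'a::alg_closed_field mat3"
  assumes "nilpotent3 A"
  shows "nil_invariants A"
proof -
  have det0: "det A = 0" using assms by (rule nilpotent3_det)
  define c1 where "c1 = trace A"
  define c2 where "c2 = A$1$1 * A$2$2 + A$1$1 * A$3$3 + A$2$2 * A$3$3
    - A$1$2 * A$2$1 - A$1$3 * A$3$1 - A$2$3 * A$3$2"
  have charpoly: "det (A - mat l) = - l * (l * l - c1 * l + c2)" for l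
    using det0 unfolding c1_def c2_def trace_def det_3
    by (simp add: sum_3 mat_def) algebra
  have root_zero: "l = 0" if "l * l - c1 * l + c2 = 0" for l
    using nilpotent3_det_diff_mat[OF assms, of l] charpoly[of l] that by (metis mult_zero_right)
  obtain r where "poly [:c2, - c1, 1:] r = 0"
    using alg_closed_imp_poly_has_root[of "[:c2, - c1, 1:]"] by auto
  then have r: "r * r - c1 * r + c2 = 0"
    by (simp add: algebra_simps)
  then have "r = 0"
    by (rule root_zero)
  with r have c2: "c2 = 0"
    by simp
  then have c1: "c1 = 0"
    using root_zero[of c1] by simp
  have "trace (A ** A) = c1\<^sup>2 - 2 * c2"
    unfolding c1_def c2_def trace_def
    by (simp add: sum_3 matrix_matrix_mult_def power2_eq_square) algebra
  then show ?thesis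
    using c1 c2 det0 unfolding nil_invariants_def c1_def by simp
qed

(* The (2,1) entry in the paper's numbering (index 3 of type 3 is index 0): tr (J1 M) = entry21 M. *)
definition entry21 :: "'a mat3 \<Rightarrow> 'a" where
  "entry21 M = M $ 1 $ 3"

lemma entry21_aabb_via_a:
  fixes a b :: "'a::field_char_0 mat3"
  assumes "nil_invariants a" "nil_invariants b"
  shows "entry21 a * entry21 (a ** a ** b ** b) =
    - entry21 (b ** a) * entry21 (a ** a ** b) - entry21 (a ** a) * entry21 (b ** b ** a)
    - entry21 b * entry21 (a ** b ** a ** a) + entry21 b * entry21 (a ** a) * trace (a ** b)
    + entry21 a * entry21 b * trace (a ** a ** b)"
  using assms unfolding nil_invariants_def entry21_def trace_def det_3 matrix_matrix_mult_def
  by (simp add: sum_3) algebra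

lemma entry21_aabb_via_b:
  fixes a b :: "'a::field_char_0 mat3"
  assumes "nil_invariants a" "nil_invariants b"
  shows "entry21 b * entry21 (a ** a ** b ** b) =
    entry21 a * entry21 (b ** a ** b ** b) - entry21 (b ** a) * entry21 (a ** b ** b)
    - entry21 (b ** b) * entry21 (b ** a ** a)"
  using assms unfolding nil_invariants_def entry21_def trace_def det_3 matrix_matrix_mult_def
  by (simp add: sum_3) algebra

lemma entry21_aabb_via_aa:
  fixes a b :: "'a::field_char_0 mat3"
  assumes "nil_invariants a" "nil_invariants b" "entry21 a = 0" "entry21 b = 0"
  shows "entry21 (a ** a) * entry21 (a ** a ** b ** b) =
    - entry21 (b ** a ** a) * entry21 (a ** a ** b) - entry21 (b ** a ** a) ^ 2
    - entry21 (b ** a) * entry21 (a ** b ** a ** a)"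
  using assms unfolding nil_invariants_def entry21_def trace_def det_3 matrix_matrix_mult_def
  by (simp add: sum_3 power2_eq_square) algebra

lemma entry21_aabb_vanishing:
  fixes a b :: "'a::field_char_0 mat3"
  assumes "nil_invariants a" "nil_invariants b" "entry21 a = 0" "entry21 (a ** a) = 0"
  shows "entry21 (a ** a ** b ** b) = 0"
  using assms unfolding nil_invariants_def entry21_def trace_def det_3 matrix_matrix_mult_def
  by (simp add: sum_3) algebra

lemma entry21_aabba_via_aa:
  fixes a b :: "'a::field_char_0 mat3"
  assumes "nil_invariants a" "nil_invariants b"
  shows "entry21 (a ** a) * entry21 (a ** a ** b ** b ** a) =
    entry21 (a ** a ** b) * entry21 (a ** b ** a ** a)
    - entry21 (a ** a) * entry21 (a ** b) * trace (a ** a ** b)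
    + entry21 (a ** a) ^ 2 * trace (a ** b ** b)"
  using assms unfolding nil_invariants_def entry21_def trace_def det_3 matrix_matrix_mult_def
  by (simp add: sum_3 power2_eq_square) algebra

lemma entry21_aabba_via_a:
  fixes a b :: "'a::field_char_0 mat3"
  assumes "nil_invariants a" "nil_invariants b" "entry21 (a ** a) = 0"
  shows "entry21 a * entry21 (a ** a ** b ** b ** a) =
    entry21 (a ** b) * entry21 (a ** b ** a ** a) - entry21 (a ** a ** b) ^ 2
    + entry21 a * (entry21 (a ** a ** b) * trace (a ** b) - entry21 (a ** b) * trace (a ** a ** b))"
  using assms unfolding nil_invariants_def entry21_def trace_def det_3 matrix_matrix_mult_def
  by (simp add: sum_3 power2_eq_square) algebra

lemma entry21_aabba_vanishing:
  fixes a b :: "'a::field_char_0 mat3"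
  assumes "nil_invariants a" "nil_invariants b" "entry21 a = 0" "entry21 (a ** a) = 0"
  shows "entry21 (a ** a ** b ** b ** a) = 0"
  using assms unfolding nil_invariants_def entry21_def trace_def det_3 matrix_matrix_mult_def
  by (simp add: sum_3) algebra

(* The values on (J1, a, b) of the words [1,2], [1,3], [1,2,2], [1,3,3], [1,2,3], [1,3,2],
   [2,2,1,3], [2,2,3,1], [3,3,1,2], [3,3,2,1], [2,2,1,2,3], [3,3,1,3,2], [2,3], [2,2,3], [2,3,3]
   of S33. *)
definition S_data :: "'a::comm_ring_1 mat3 \<Rightarrow> 'a mat3 \<Rightarrow> 'a list" where
  "S_data a b =
    [entry21 a, entry21 b, entry21 (a ** a), entry21 (b ** b), entry21 (a ** b), entry21 (b ** a),
     entry21 (b ** a ** a), entry21 (a ** a ** b), entry21 (a ** b ** b), entry21 (b ** b ** a),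
     entry21 (a ** b ** a ** a), entry21 (b ** a ** b ** b),
     trace (a ** b), trace (a ** a ** b), trace (a ** b ** b)]"

lemma S_data_swap:
  fixes a b a' b' :: "'a::comm_ring_1 mat3"
  assumes "S_data a b = S_data a' b'"
  shows "S_data b a = S_data b' a'"
proof -
  have cyclic: "trace (b ** a) = trace (a ** b)" "trace (b ** b ** a) = trace (a ** b ** b)"
    "trace (b ** a ** a) = trace (a ** a ** b)" for a b :: "'a mat3"
    by (metis trace_mul_sym matrix_mul_assoc)+
  show ?thesis
    using assms unfolding S_data_def by (simp add: cyclic[of a b] cyclic[of a' b'])
qed

lemma entry21_aabb_determined:
  fixes a b a' b' :: "'a::field_char_0 mat3"
  assumes nil: "nil_invariants a" "nil_invariants b" "nil_invariants a'" "nil_invariants b'"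
    and S: "S_data a b = S_data a' b'"
  shows "entry21 (a ** a ** b ** b) = entry21 (a' ** a' ** b' ** b')"
proof -
  note S_eqs = S[unfolded S_data_def, simplified]
  consider "entry21 a \<noteq> 0" | "entry21 a = 0" "entry21 b \<noteq> 0"
    | "entry21 a = 0" "entry21 b = 0" "entry21 (a ** a) \<noteq> 0" | "entry21 a = 0" "entry21 (a ** a) = 0"
    by blast
  then show ?thesis
  proof cases
    case 1
    have "entry21 a * entry21 (a ** a ** b ** b) = entry21 a * entry21 (a' ** a' ** b' ** b')"
      using 1 entry21_aabb_via_a[OF nil(1,2)] entry21_aabb_via_a[OF nil(3,4)] S_eqs by simp
    with 1 show ?thesis by simp
  next
    case 2
    have "entry21 b * entry21 (a ** a ** b ** b) = entry21 b * entry21 (a' ** a' ** b' ** b')"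
      using 2 entry21_aabb_via_b[OF nil(1,2)] entry21_aabb_via_b[OF nil(3,4)] S_eqs by simp
    with 2 show ?thesis by simp
  next
    case 3
    have "entry21 (a ** a) * entry21 (a ** a ** b ** b) = entry21 (a ** a) * entry21 (a' ** a' ** b' ** b')"
      using 3 entry21_aabb_via_aa[OF nil(1,2)] entry21_aabb_via_aa[OF nil(3,4)] S_eqs by simp
    with 3 show ?thesis by simp
  next
    case 4
    then show ?thesis
      using entry21_aabb_vanishing[OF nil(1,2)] entry21_aabb_vanishing[OF nil(3,4)] S_eqs by simp
  qed
qed

lemma entry21_aabba_determined:
  fixes a b a' b' :: "'a::field_char_0 mat3"
  assumes nil: "nil_invariants a" "nil_invariants b" "nil_invariants a'" "nil_invariants b'"
    and S: "S_data a b = S_data a' b'"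
  shows "entry21 (a ** a ** b ** b ** a) = entry21 (a' ** a' ** b' ** b' ** a')"
proof -
  note S_eqs = S[unfolded S_data_def, simplified]
  consider "entry21 (a ** a) \<noteq> 0" | "entry21 (a ** a) = 0" "entry21 a \<noteq> 0"
    | "entry21 a = 0" "entry21 (a ** a) = 0"
    by blast
  then show ?thesis
  proof cases
    case 1
    have "entry21 (a ** a) * entry21 (a ** a ** b ** b ** a) = entry21 (a ** a) * entry21 (a' ** a' ** b' ** b' ** a')"
      using 1 entry21_aabba_via_aa[OF nil(1,2)] entry21_aabba_via_aa[OF nil(3,4)] S_eqs by simp
    with 1 show ?thesis by simp
  next
    case 2
    have "entry21 a * entry21 (a ** a ** b ** b ** a) = entry21 a * entry21 (a' ** a' ** b' ** b' ** a')"
      using 2 entry21_aabba_via_a[OF nil(1,2)] entry21_aabba_via_a[OF nil(3,4)] S_eqs by simp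
    with 2 show ?thesis by simp
  next
    case 3
    then show ?thesis
      using entry21_aabba_vanishing[OF nil(1,2)] entry21_aabba_vanishing[OF nil(3,4)] S_eqs by simp
  qed
qed

definition word_mat :: "(nat \<Rightarrow> 'a::semiring_1 mat3) \<Rightarrow> nat list \<Rightarrow> 'a mat3" where
  "word_mat A w = foldr (\<lambda>i M. A i ** M) w (mat 1)"

lemma word_mat_Nil [simp]: "word_mat A [] = mat 1"
  by (simp add: word_mat_def)

lemma word_mat_Cons [simp]: "word_mat A (i # w) = A i ** word_mat A w"
  by (simp add: word_mat_def)

lemma word_mat_append: "word_mat A (u @ v) = word_mat A u ** word_mat A v"
  by (induction u) (simp_all add: matrix_mul_assoc)

lemma trw_eq_trace_word_mat: "trw A w = trace (word_mat A w)"
  by (simp add: trw_def word_mat_def)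

lemma trw_rotate: "trw A (u @ v) = trw A (v @ u)"
  for A :: "nat \<Rightarrow> 'a::comm_semiring_1 mat3"
  unfolding trw_eq_trace_word_mat word_mat_append by (rule trace_mul_sym)

(* The side conditions only serve to make this a terminating rewrite rule: it rotates a word until
   its first letter is 1. *)
lemma trw_rotate_to_1:
  fixes A :: "nat \<Rightarrow> 'a::comm_semiring_1 mat3"
  assumes "i \<noteq> 1" "1 \<in> set w"
  shows "trw A (i # w) = trw A (w @ [i])"
  using trw_rotate[of A "[i]" w] by simp

lemma triple_apply [simp]:
  "triple X1 X2 X3 1 = X1" "triple X1 X2 X3 2 = X2" "triple X1 X2 X3 3 = X3"
  by (simp_all add: triple_def)

lemma trace_J1_mult: "trace (J1 ** M) = entry21 M"
  for M :: "'a::comm_semiring_1 mat3"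
  by (simp add: J1_def trace_def matrix_matrix_mult_def entry21_def sum_3)

lemma entry21_J1_mult: "entry21 (J1 ** M) = 0"
  for M :: "'a::comm_semiring_1 mat3"
  by (simp add: J1_def matrix_matrix_mult_def entry21_def sum_3)

lemma trw_J1_Cons: "trw (triple J1 a b) (1 # w) = entry21 (word_mat (triple J1 a b) w)"
  by (simp add: trw_eq_trace_word_mat trace_J1_mult del: One_nat_def)

(* To be used with One_nat_def removed from the simpset: otherwise the letter 1 turns into Suc 0
   and these rules no longer match. *)
lemmas trw_J1_eval = trw_rotate_to_1 trw_J1_Cons entry21_J1_mult matrix_mul_assoc[symmetric]

lemma S_data_eq_if_S33_agree:
  fixes a b a' b' :: "'a::comm_ring_1 mat3"
  assumes "\<forall>w\<in>S33. trw (triple J1 a b) w = trw (triple J1 a' b') w"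
  shows "S_data a b = S_data a' b'"
proof -
  have agree: "trw (triple J1 a b) w = trw (triple J1 a' b') w" if "w \<in> S33" for w
    using assms that by blast
  have "[1,2] \<in> S33" "[1,3] \<in> S33" "[1,2,2] \<in> S33" "[1,3,3] \<in> S33" "[1,2,3] \<in> S33"
    "[1,3,2] \<in> S33" "[2,2,1,3] \<in> S33" "[2,2,3,1] \<in> S33" "[3,3,1,2] \<in> S33" "[3,3,2,1] \<in> S33"
    "[2,2,1,2,3] \<in> S33" "[3,3,1,3,2] \<in> S33" "[2,3] \<in> S33" "[2,2,3] \<in> S33" "[2,3,3] \<in> S33"
    unfolding S33_def by (simp; blast)+
  from this[THEN agree] show ?thesis
    unfolding S_data_def by (simp add: trw_J1_eval del: One_nat_def) (simp add: trw_eq_trace_word_mat)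
qed

lemma nat_perm3:
  assumes "{i, j, k} = {1::nat, 2, 3}"
  shows "(i, j, k) \<in> {(1,2,3), (1,3,2), (2,1,3), (2,3,1), (3,1,2), (3,2,1)}"
proof -
  have "i \<in> {1,2,3}" "j \<in> {1,2,3}" "k \<in> {1,2,3}" "{1,2,3} \<subseteq> {i,j,k}"
    using assms by blast+
  then show ?thesis
    by (simp only: insert_iff empty_iff insert_subset) (elim disjE; simp)
qed

lemma P33'_agree:
  fixes a b a' b' :: "'a::comm_ring_1 mat3"
  assumes "entry21 (a ** a ** b ** b) = entry21 (a' ** a' ** b' ** b')"
    and "entry21 (b ** b ** a ** a) = entry21 (b' ** b' ** a' ** a')"
    and "entry21 (a ** a ** b ** b ** a) = entry21 (a' ** a' ** b' ** b' ** a')"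
    and "entry21 (b ** b ** a ** a ** b) = entry21 (b' ** b' ** a' ** a' ** b')"
    and "w \<in> P33'"
  shows "trw (triple J1 a b) w = trw (triple J1 a' b') w"
proof -
  from assms(5) consider
      (aabbc) i j k where "w = [i,i,j,j,k]" "{i, j, k} = {1, 2, 3}"
    | (aabbac) i j k where "w = [i,i,j,j,i,k]" "{i, j, k} = {1, 2, 3}"
    | (aabbcc) "w = [1,1,2,2,3,3]"
    unfolding P33'_def by blast
  then show ?thesis
  proof cases
    case aabbc
    from nat_perm3[OF aabbc(2)] show ?thesis
      unfolding aabbc(1)
      using assms(1-4) by (auto simp: trw_J1_eval simp del: One_nat_def)
  next
    case aabbac
    from nat_perm3[OF aabbac(2)] show ?thesis
      unfolding aabbac(1)
      using assms(1-4) by (auto simp: trw_J1_eval simp del: One_nat_def)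
  next
    case aabbcc
    then show ?thesis
      by (simp add: trw_J1_eval del: One_nat_def)
  qed
qed

theorem lemma7p1:
  fixes A2 A3 B2 B3 :: "'a::{alg_closed_field, field_char_0} mat3"
  assumes "in_N33 (triple J1 A2 A3)"
      and "in_N33 (triple J1 B2 B3)"
      and "\<forall>w\<in>S33. trw (triple J1 A2 A3) w = trw (triple J1 B2 B3) w"
  shows "\<forall>w\<in>P33. trw (triple J1 A2 A3) w = trw (triple J1 B2 B3) w"
proof -
  have nil: "nil_invariants A2" "nil_invariants A3" "nil_invariants B2" "nil_invariants B3"
    using assms(1,2) nilpotent3_nil_invariants unfolding in_N33_def by fastforce+
  have S: "S_data A2 A3 = S_data B2 B3"
    using assms(3) by (rule S_data_eq_if_S33_agree)
  have S_swapped: "S_data A3 A2 = S_data B3 B2"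
    using S by (rule S_data_swap)
  have "trw (triple J1 A2 A3) w = trw (triple J1 B2 B3) w" if "w \<in> P33'" for w
    using P33'_agree[OF entry21_aabb_determined[OF nil S] entry21_aabb_determined[OF nil(2,1,4,3) S_swapped]
        entry21_aabba_determined[OF nil S] entry21_aabba_determined[OF nil(2,1,4,3) S_swapped] that] .
  then show ?thesis
    using assms(3) unfolding P33_def by blast
qed

end
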